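(* Let $Y$ be a sofic shift and $(G,L_G)$ a right-resolving and regular labeled graph presenting $Y$. Then there is a labeled-graph homomorphism $\theta : (G,L_G) \to (\mathbb K(Y), L_{\mathbb K(Y)})$ such that the induced sliding block code satisfies $\theta(\mathcal R(L_G)) \subseteq \mathcal R(L_{\mathbb K(Y)})$. If $(G,L_G)$ is also follower-separated, then $\theta : G \to \mathbb K(Y)$ is injective.
   Context: A labeled graph $(G,L_G)$: finite directed graph (vertices $V_G$, edges $E_G$, source/terminal maps $s_G,t_G$) without sinks or sources, labeling $L_G:E_G\to A$, edge shift $X_G$; $L_G$ acts coordinatewise; presents $Y=L_G(X_G)$. Right-resolving: distinct edges with the same source have distinct labels. $f_G(v)=\{L_G(x): x$ a right-infinite path starting at $v\}$. For $y\in Y$, $F(y)=\{w\in Y[0,\infty): y_{(-\infty,-1]}w\in Y\}$ with $Y[0,\infty)=\{y_{[0,\infty)}:y\in Y\}$. A vertex $v$ is regular if there is $z\in X_G$ whose edge $z_{-1}$ ends at $v$ and $f_G(v)=F(L_G(z))$; the graph is regular if all vertices are. Follower-separated: $f_G(v)=f_G(w)\Rightarrow v=w$. For a sliding block code $\pi:X\to Y$, $\mathbb U(x)=\{z\in X:\exists N\ \forall i\le N,\ z_i=x_i\}$; $x$ is regular for $\pi$ if $\pi$ maps $\mathbb U(x)$ onto $\mathbb U(\pi(x))$; $\mathcal R(\pi)$ is the set of such points. Future cover $(\mathbb K(Y),L_{\mathbb K(Y)})$: vertices the distinct sets $F(y)$, $y\in Y$, and an edge labeled $a$ from $F(y)$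 to $F(z)$ exactly when $F(z)=\{w\in A^{\mathbb N}: aw\in F(y)\}$ (one edge per such pair and label). A labeled-graph homomorphism is a graph homomorphism preserving labels; it induces a sliding block code on edge shifts. *)

theory Defs
  imports Main
begin

definition labeled_graph ::
  "'v set \<Rightarrow> 'e set \<Rightarrow> ('e \<Rightarrow> 'v) \<Rightarrow> ('e \<Rightarrow> 'v) \<Rightarrow> ('e \<Rightarrow> 'a) \<Rightarrow> bool" where
  "labeled_graph V E s t L \<longleftrightarrow> finite V \<and> finite E \<and>
     (\<forall>e\<in>E. s e \<in> V \<and> t e \<in> V) \<and>
     (\<forall>v\<in>V. (\<exists>e\<in>E. s e = v) \<and> (\<exists>e\<in>E. t e = v))"

definition edge_shift :: "'e set \<Rightarrow> ('e \<Rightarrow> 'v) \<Rightarrow> ('e \<Rightarrow> 'v) \<Rightarrow> (int \<Rightarrow> 'e) set" where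
  "edge_shift E s t = {x. (\<forall>i. x i \<in> E) \<and> (\<forall>i. t (x i) = s (x (i + 1)))}"

definition code_map :: "('e \<Rightarrow> 'a) \<Rightarrow> (int \<Rightarrow> 'e) \<Rightarrow> (int \<Rightarrow> 'a)" where
  "code_map L x = (\<lambda>i. L (x i))"

definition presented_shift ::
  "'e set \<Rightarrow> ('e \<Rightarrow> 'v) \<Rightarrow> ('e \<Rightarrow> 'v) \<Rightarrow> ('e \<Rightarrow> 'a) \<Rightarrow> (int \<Rightarrow> 'a) set" where
  "presented_shift E s t L = code_map L ` edge_shift E s t"

definition right_resolving :: "'e set \<Rightarrow> ('e \<Rightarrow> 'v) \<Rightarrow> ('e \<Rightarrow> 'a) \<Rightarrow> bool" where
  "right_resolving E s L \<longleftrightarrow> (\<forall>e\<in>E. \<forall>e'\<in>E. e \<noteq> e' \<and> s e = s e' \<longrightarrow> L e \<noteq> L e')"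

definition follower_set ::
  "'e set \<Rightarrow> ('e \<Rightarrow> 'v) \<Rightarrow> ('e \<Rightarrow> 'v) \<Rightarrow> ('e \<Rightarrow> 'a) \<Rightarrow> 'v \<Rightarrow> (nat \<Rightarrow> 'a) set" where
  "follower_set E s t L v = {(\<lambda>n. L (p n)) | p.
      (\<forall>n. p n \<in> E) \<and> s (p 0) = v \<and> (\<forall>n. t (p n) = s (p (Suc n)))}"

definition follower_separated ::
  "'v set \<Rightarrow> 'e set \<Rightarrow> ('e \<Rightarrow> 'v) \<Rightarrow> ('e \<Rightarrow> 'v) \<Rightarrow> ('e \<Rightarrow> 'a) \<Rightarrow> bool" where
  "follower_separated V E s t L \<longleftrightarrow>
     (\<forall>v\<in>V. \<forall>w\<in>V. follower_set E s t L v = follower_set E s t L w \<longrightarrow> v = w)"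

definition right_rays :: "(int \<Rightarrow> 'a) set \<Rightarrow> (nat \<Rightarrow> 'a) set" where
  "right_rays Y = {(\<lambda>n. y (int n)) | y. y \<in> Y}"

definition glue :: "(int \<Rightarrow> 'a) \<Rightarrow> (nat \<Rightarrow> 'a) \<Rightarrow> (int \<Rightarrow> 'a)" where
  "glue y w = (\<lambda>i. if i < 0 then y i else w (nat i))"

definition future :: "(int \<Rightarrow> 'a) set \<Rightarrow> (int \<Rightarrow> 'a) \<Rightarrow> (nat \<Rightarrow> 'a) set" where
  "future Y y = {w \<in> right_rays Y. glue y w \<in> Y}"

definition regular_vertex ::
  "'e set \<Rightarrow> ('e \<Rightarrow> 'v) \<Rightarrow> ('e \<Rightarrow> 'v) \<Rightarrow> ('e \<Rightarrow> 'a) \<Rightarrow> 'v \<Rightarrow> bool" where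
  "regular_vertex E s t L v \<longleftrightarrow>
     (\<exists>z\<in>edge_shift E s t. t (z (-1)) = v \<and>
        follower_set E s t L v = future (presented_shift E s t L) (code_map L z))"

definition regular_graph ::
  "'v set \<Rightarrow> 'e set \<Rightarrow> ('e \<Rightarrow> 'v) \<Rightarrow> ('e \<Rightarrow> 'v) \<Rightarrow> ('e \<Rightarrow> 'a) \<Rightarrow> bool" where
  "regular_graph V E s t L \<longleftrightarrow> (\<forall>v\<in>V. regular_vertex E s t L v)"

definition left_asymp :: "(int \<Rightarrow> 'b) set \<Rightarrow> (int \<Rightarrow> 'b) \<Rightarrow> (int \<Rightarrow> 'b) set" where
  "left_asymp X x = {z \<in> X. \<exists>N. \<forall>i\<le>N. z i = x i}"

definition regular_points ::
  "((int \<Rightarrow> 'b) \<Rightarrow> (int \<Rightarrow> 'c)) \<Rightarrow> (int \<Rightarrow> 'b) set \<Rightarrow> (int \<Rightarrow> 'c) set \<Rightarrow> (int \<Rightarrow> 'b) set" where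
  "regular_points \<pi> X Y = {x \<in> X. \<pi> ` left_asymp X x = left_asymp Y (\<pi> x)}"

text \<open>Future cover \<bbbK>(Y): vertices are the sets F(y); an edge is a triple
(F, a, F') with F' = {w. a w \<in> F}; source, label, terminal are the components.\<close>
type_synonym 'a fc_vertex = "(nat \<Rightarrow> 'a) set"
type_synonym 'a fc_edge = "'a fc_vertex \<times> 'a \<times> 'a fc_vertex"

definition fc_vertices :: "(int \<Rightarrow> 'a) set \<Rightarrow> 'a fc_vertex set" where
  "fc_vertices Y = {future Y y | y. y \<in> Y}"

definition fc_edges :: "(int \<Rightarrow> 'a) set \<Rightarrow> 'a fc_edge set" where
  "fc_edges Y = {(F, a, F') | F a F'. F \<in> fc_vertices Y \<and> F' \<in> fc_vertices Y \<and>
                   F' = {w. (\<lambda>n. case n of 0 \<Rightarrow> a | Suc m \<Rightarrow> w m) \<in> F}}"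

definition fc_src :: "'a fc_edge \<Rightarrow> 'a fc_vertex" where "fc_src e = fst e"
definition fc_tgt :: "'a fc_edge \<Rightarrow> 'a fc_vertex" where "fc_tgt e = snd (snd e)"
definition fc_lab :: "'a fc_edge \<Rightarrow> 'a" where "fc_lab e = fst (snd e)"

definition labeled_graph_hom ::
  "'v set \<Rightarrow> 'e set \<Rightarrow> ('e \<Rightarrow> 'v) \<Rightarrow> ('e \<Rightarrow> 'v) \<Rightarrow> ('e \<Rightarrow> 'a) \<Rightarrow>
   'w set \<Rightarrow> 'f set \<Rightarrow> ('f \<Rightarrow> 'w) \<Rightarrow> ('f \<Rightarrow> 'w) \<Rightarrow> ('f \<Rightarrow> 'a) \<Rightarrow>
   ('v \<Rightarrow> 'w) \<Rightarrow> ('e \<Rightarrow> 'f) \<Rightarrow> bool" where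
  "labeled_graph_hom V E s t L V' E' s' t' L' \<theta>V \<theta>E \<longleftrightarrow>
     (\<forall>v\<in>V. \<theta>V v \<in> V') \<and>
     (\<forall>e\<in>E. \<theta>E e \<in> E' \<and> s' (\<theta>E e) = \<theta>V (s e) \<and> t' (\<theta>E e) = \<theta>V (t e) \<and> L' (\<theta>E e) = L e)"

end

theory Submission
  imports Defs
begin

text \<open>The homomorphism sends a vertex v to its follower set f_G(v), a vertex of \<bbbK>(Y) by
regularity, and an edge e to (f_G(s e), L e, f_G(t e)); this is an edge of \<bbbK>(Y) because, G being
right-resolving, f_G(t e) consists of the w with (L e) w \<in> f_G(s e). Right-resolvingness also
lets every path of \<bbbK>(Y) leaving f_G(u) be lifted to a path of G leaving u with the same labels.
Hence a point of the edge shift of \<bbbK>(Y) that is left asymptotic to \<theta>(x) has the labels of a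
point of X_G left asymptotic to x, obtained by splicing the lifted tail onto x; the reverse
inclusion of label sets comes from the regularity of x. On vertices injectivity is follower
separation, and on edges it follows from this and right-resolvingness.\<close>

lemma right_resolvingD:
  assumes "right_resolving E s L" and "e \<in> E" "e' \<in> E" "s e = s e'" "L e = L e'"
  shows "e = e'"
  using assms unfolding right_resolving_def by blast

lemma edge_shift_hom_comp:
  assumes "labeled_graph_hom V E s t L V' E' s' t' L' \<theta>V \<theta>E" and "x \<in> edge_shift E s t"
  shows "\<theta>E \<circ> x \<in> edge_shift E' s' t'"
  using assms unfolding labeled_graph_hom_def edge_shift_def by simp

lemma code_map_hom_comp:
  assumes "labeled_graph_hom V E s t L V' E' s' t' L' \<theta>V \<theta>E" and "x \<in> edge_shift E s t"
  shows "code_map L' (\<theta>E \<circ> x) = code_map L x"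
  using assms unfolding labeled_graph_hom_def edge_shift_def code_map_def by auto

lemma left_asymp_hom_comp:
  assumes "labeled_graph_hom V E s t L V' E' s' t' L' \<theta>V \<theta>E"
  shows "(\<lambda>z. \<theta>E \<circ> z) ` left_asymp (edge_shift E s t) x \<subseteq> left_asymp (edge_shift E' s' t') (\<theta>E \<circ> x)"
  using edge_shift_hom_comp[OF assms] unfolding left_asymp_def by fastforce

lemma regular_points_transfer:
  assumes "x \<in> regular_points \<pi> X Y" and "\<theta> x \<in> X'"
    and "\<And>z. z \<in> X \<Longrightarrow> \<pi>' (\<theta> z) = \<pi> z"
    and "\<theta> ` left_asymp X x \<subseteq> left_asymp X' (\<theta> x)"
    and "\<pi>' ` left_asymp X' (\<theta> x) \<subseteq> left_asymp Y (\<pi> x)"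
  shows "\<theta> x \<in> regular_points \<pi>' X' Y"
proof -
  have "x \<in> X" and U: "\<pi> ` left_asymp X x = left_asymp Y (\<pi> x)"
    using assms(1) unfolding regular_points_def by auto
  have "left_asymp Y (\<pi> x) = \<pi>' ` \<theta> ` left_asymp X x"
    unfolding U[symmetric] image_image using assms(3)
    by (intro image_cong) (auto simp: left_asymp_def)
  also have "\<dots> \<subseteq> \<pi>' ` left_asymp X' (\<theta> x)"
    using assms(4) by blast
  finally show ?thesis
    using assms(2,3,5) \<open>x \<in> X\<close> unfolding regular_points_def by auto
qed

definition splice :: "(int \<Rightarrow> 'b) \<Rightarrow> int \<Rightarrow> (nat \<Rightarrow> 'b) \<Rightarrow> int \<Rightarrow> 'b" where
  "splice x N p = (\<lambda>i. if i \<le> N then x i else p (nat (i - N - 1)))"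

lemma splice_in_edge_shift:
  assumes "x \<in> edge_shift E s t" and "\<forall>n. p n \<in> E" and "s (p 0) = t (x N)"
    and "\<forall>n. t (p n) = s (p (Suc n))"
  shows "splice x N p \<in> edge_shift E s t"
  unfolding edge_shift_def
proof (intro CollectI conjI allI)
  fix i
  show "splice x N p i \<in> E"
    using assms(1,2) by (simp add: splice_def edge_shift_def)
  consider "i < N" | "i = N" | "i > N" by linarith
  then show "t (splice x N p i) = s (splice x N p (i + 1))"
  proof cases
    case 3
    then have "nat (i + 1 - N - 1) = Suc (nat (i - N - 1))" by auto
    then show ?thesis using 3 assms(4) by (simp add: splice_def)
  qed (use assms(1,3) in \<open>auto simp: splice_def edge_shift_def\<close>)
qed

lemma path_labels_in_follower_set:
  assumes "\<forall>n. p n \<in> E" and "\<forall>n. t (p n) = s (p (Suc n))"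
  shows "(\<lambda>n. L (p n)) \<in> follower_set E s t L (s (p 0))"
  using assms unfolding follower_set_def by blast

lemma case_nat_in_follower_set_iff:
  assumes "right_resolving E s L" and "e \<in> E"
  shows "case_nat (L e) w \<in> follower_set E s t L (s e) \<longleftrightarrow> w \<in> follower_set E s t L (t e)"
proof
  assume "case_nat (L e) w \<in> follower_set E s t L (s e)"
  then obtain p where p: "case_nat (L e) w = (\<lambda>n. L (p n))" "\<forall>n. p n \<in> E" "s (p 0) = s e"
      "\<forall>n. t (p n) = s (p (Suc n))"
    unfolding follower_set_def by blast
  have "p 0 = e"
    using right_resolvingD[OF assms(1)] assms(2) p(2,3) fun_cong[OF p(1), of 0] by simp
  then have "s (p (Suc 0)) = t e"
    using p(4) by metis
  moreover have "w = (\<lambda>n. L (p (Suc n)))"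
    using fun_cong[OF p(1), of "Suc _"] by auto
  ultimately show "w \<in> follower_set E s t L (t e)"
    using path_labels_in_follower_set[of "p \<circ> Suc" E t s L] p(2,4) by simp
next
  assume "w \<in> follower_set E s t L (t e)"
  then obtain p where p: "w = (\<lambda>n. L (p n))" "\<forall>n. p n \<in> E" "s (p 0) = t e"
      "\<forall>n. t (p n) = s (p (Suc n))"
    unfolding follower_set_def by blast
  have "case_nat (L e) w = (\<lambda>n. L (case_nat e p n))"
    using p(1) by (auto split: nat.split)
  then show "case_nat (L e) w \<in> follower_set E s t L (s e)"
    using path_labels_in_follower_set[of "case_nat e p" E t s L] assms(2) p(2-4)
    by (simp split: nat.split)
qed

lemma fc_vertices_nonempty:
  assumes "F \<in> fc_vertices Y" shows "F \<noteq> {}"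
proof -
  obtain y where "y \<in> Y" "F = future Y y"
    using assms unfolding fc_vertices_def by blast
  moreover have "glue y (\<lambda>n. y (int n)) = y"
    by (auto simp: glue_def)
  ultimately have "(\<lambda>n. y (int n)) \<in> F"
    unfolding future_def right_rays_def by auto
  then show ?thesis by blast
qed

lemma lift_fc_edge:
  assumes "right_resolving E s L" and "(F, a, F') \<in> fc_edges Y"
    and "follower_set E s t L u = F"
  shows "\<exists>e\<in>E. s e = u \<and> L e = a \<and> follower_set E s t L (t e) = F'"
proof -
  have "F' \<in> fc_vertices Y" and F': "F' = {w. case_nat a w \<in> F}"
    using assms(2) unfolding fc_edges_def by auto
  then obtain w where "case_nat a w \<in> follower_set E s t L u"
    using fc_vertices_nonempty assms(3) by blast
  then obtain p where p: "case_nat a w = (\<lambda>n. L (p n))" "\<forall>n. p n \<in> E" "s (p 0) = u"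
    unfolding follower_set_def by blast
  have "L (p 0) = a"
    using fun_cong[OF p(1), of 0] by simp
  then have "follower_set E s t L (t (p 0)) = F'"
    using case_nat_in_follower_set_iff[OF assms(1) p(2)[rule_format, of 0]] p(3) assms(3) F'
    by auto
  then show ?thesis
    using p(2,3) \<open>L (p 0) = a\<close> by blast
qed

lemma lift_fc_path:
  assumes "right_resolving E s L" and "\<forall>n. q n \<in> fc_edges Y"
    and "\<forall>n. fc_tgt (q n) = fc_src (q (Suc n))"
    and "follower_set E s t L u = fc_src (q 0)"
  shows "(\<lambda>n. fc_lab (q n)) \<in> follower_set E s t L u"
proof -
  define P where "P n e \<longleftrightarrow> e \<in> E \<and> L e = fc_lab (q n) \<and>
      follower_set E s t L (t e) = fc_tgt (q n)" for n e
  have step: "\<exists>e. s e = v \<and> P n e" if "follower_set E s t L v = fc_src (q n)" for n v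
  proof -
    have "(fc_src (q n), fc_lab (q n), fc_tgt (q n)) \<in> fc_edges Y"
      using assms(2) by (simp add: fc_src_def fc_lab_def fc_tgt_def)
    then show ?thesis
      using lift_fc_edge[OF assms(1) _ that] unfolding P_def by blast
  qed
  obtain p where p: "\<forall>n. (P n (p n) \<and> (n = 0 \<longrightarrow> s (p n) = u)) \<and> t (p n) = s (p (Suc n))"
  proof (rule dependent_nat_choice[of "\<lambda>n e. P n e \<and> (n = 0 \<longrightarrow> s e = u)"
        "\<lambda>_ e e'. t e = s e'", THEN exE])
    show "\<exists>e. P 0 e \<and> (0 = 0 \<longrightarrow> s e = u)"
      using step[OF assms(4)] by auto
    show "\<exists>e'. (P (Suc n) e' \<and> (Suc n = 0 \<longrightarrow> s e' = u)) \<and> t e = s e'"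
      if "P n e \<and> (n = 0 \<longrightarrow> s e = u)" for e n
      using that step[of "t e" "Suc n"] assms(3) unfolding P_def by auto
  qed blast
  then have "(\<lambda>n. L (p n)) \<in> follower_set E s t L u"
    using path_labels_in_follower_set[of p E t s L] unfolding P_def by auto
  moreover have "(\<lambda>n. L (p n)) = (\<lambda>n. fc_lab (q n))"
    using p unfolding P_def by auto
  ultimately show ?thesis by simp
qed

definition future_cover_edge ::
  "'e set \<Rightarrow> ('e \<Rightarrow> 'v) \<Rightarrow> ('e \<Rightarrow> 'v) \<Rightarrow> ('e \<Rightarrow> 'a) \<Rightarrow> 'e \<Rightarrow> 'a fc_edge" where
  "future_cover_edge E s t L e = (follower_set E s t L (s e), L e, follower_set E s t L (t e))"

lemma follower_set_in_fc_vertices: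
  assumes "regular_vertex E s t L v"
  shows "follower_set E s t L v \<in> fc_vertices (presented_shift E s t L)"
proof -
  obtain z where "z \<in> edge_shift E s t"
      and "follower_set E s t L v = future (presented_shift E s t L) (code_map L z)"
    using assms unfolding regular_vertex_def by blast
  then show ?thesis
    unfolding fc_vertices_def presented_shift_def by blast
qed

lemma future_cover_edge_in_fc_edges:
  assumes "right_resolving E s L" and "e \<in> E"
    and "regular_vertex E s t L (s e)" and "regular_vertex E s t L (t e)"
  shows "future_cover_edge E s t L e \<in> fc_edges (presented_shift E s t L)"
  using follower_set_in_fc_vertices[OF assms(3)] follower_set_in_fc_vertices[OF assms(4)]
    case_nat_in_follower_set_iff[OF assms(1,2)]
  unfolding future_cover_edge_def fc_edges_def by blast

lemma labeled_graph_hom_future_cover: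
  assumes "labeled_graph V E s t L" and "right_resolving E s L" and "regular_graph V E s t L"
  shows "labeled_graph_hom V E s t L
    (fc_vertices (presented_shift E s t L)) (fc_edges (presented_shift E s t L)) fc_src fc_tgt fc_lab
    (follower_set E s t L) (future_cover_edge E s t L)"
  unfolding labeled_graph_hom_def
proof (intro conjI ballI)
  fix v assume "v \<in> V"
  then have "regular_vertex E s t L v"
    using assms(3) unfolding regular_graph_def by blast
  then show "follower_set E s t L v \<in> fc_vertices (presented_shift E s t L)"
    by (rule follower_set_in_fc_vertices)
next
  fix e assume "e \<in> E"
  then have "s e \<in> V" "t e \<in> V"
    using assms(1) unfolding labeled_graph_def by auto
  then show "future_cover_edge E s t L e \<in> fc_edges (presented_shift E s t L)"
    using future_cover_edge_in_fc_edges[OF assms(2) \<open>e \<in> E\<close>] assms(3)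
    unfolding regular_graph_def by blast
qed (simp_all add: future_cover_edge_def fc_src_def fc_tgt_def fc_lab_def)

lemma code_map_left_asymp_future_cover:
  assumes "right_resolving E s L" and "x \<in> edge_shift E s t"
    and "z \<in> left_asymp (edge_shift (fc_edges Y) fc_src fc_tgt) (future_cover_edge E s t L \<circ> x)"
  shows "code_map fc_lab z \<in> left_asymp (presented_shift E s t L) (code_map L x)"
proof -
  obtain N where z: "z \<in> edge_shift (fc_edges Y) fc_src fc_tgt"
      and zx: "\<forall>i\<le>N. z i = future_cover_edge E s t L (x i)"
    using assms(3) unfolding left_asymp_def by auto
  define q where "q n = z (N + 1 + int n)" for n
  have "fc_tgt (z N) = fc_src (z (N + 1))"
    using z unfolding edge_shift_def by simp
  then have "follower_set E s t L (t (x N)) = fc_src (q 0)"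
    using zx by (simp add: q_def future_cover_edge_def fc_tgt_def)
  moreover have "\<forall>n. q n \<in> fc_edges Y" "\<forall>n. fc_tgt (q n) = fc_src (q (Suc n))"
    using z unfolding q_def edge_shift_def by (auto simp: add.assoc)
  ultimately have "(\<lambda>n. fc_lab (q n)) \<in> follower_set E s t L (t (x N))"
    using lift_fc_path[OF assms(1)] by blast
  then obtain p where p: "(\<lambda>n. fc_lab (q n)) = (\<lambda>n. L (p n))" "\<forall>n. p n \<in> E"
      "s (p 0) = t (x N)" "\<forall>n. t (p n) = s (p (Suc n))"
    unfolding follower_set_def by blast
  have "code_map L (splice x N p) = code_map fc_lab z"
  proof
    fix i
    show "code_map L (splice x N p) i = code_map fc_lab z i"
    proof (cases "i \<le> N")
      case False
      then have "N + 1 + int (nat (i - N - 1)) = i" by auto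
      then have "L (p (nat (i - N - 1))) = fc_lab (z i)"
        using fun_cong[OF p(1), of "nat (i - N - 1)"] by (simp add: q_def)
      then show ?thesis
        using False by (simp add: code_map_def splice_def)
    qed (use zx in \<open>simp add: code_map_def splice_def future_cover_edge_def fc_lab_def\<close>)
  qed
  moreover have "splice x N p \<in> edge_shift E s t"
    using splice_in_edge_shift[OF assms(2) p(2-4)] .
  moreover have "\<forall>i\<le>N. code_map fc_lab z i = code_map L x i"
    using zx by (simp add: code_map_def future_cover_edge_def fc_lab_def)
  ultimately show ?thesis
    unfolding left_asymp_def presented_shift_def by force
qed

lemma follower_separated_iff_inj_on:
  "follower_separated V E s t L \<longleftrightarrow> inj_on (follower_set E s t L) V"
  unfolding follower_separated_def inj_on_def by blast

lemma inj_on_future_cover_edge: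
  assumes "labeled_graph V E s t L" and "right_resolving E s L"
    and "follower_separated V E s t L"
  shows "inj_on (future_cover_edge E s t L) E"
proof (rule inj_onI)
  fix e e' assume e: "e \<in> E" "e' \<in> E"
    and eq: "future_cover_edge E s t L e = future_cover_edge E s t L e'"
  have "s e \<in> V" "s e' \<in> V"
    using assms(1) e unfolding labeled_graph_def by auto
  then have "s e = s e'"
    using eq assms(3) by (auto simp: future_cover_edge_def follower_separated_iff_inj_on dest: inj_onD)
  moreover have "L e = L e'"
    using eq by (simp add: future_cover_edge_def)
  ultimately show "e = e'"
    using right_resolvingD[OF assms(2) e] by blast
qed

theorem lemma2p18:
  fixes V :: "'v set" and E :: "'e set" and s t :: "'e \<Rightarrow> 'v" and L :: "'e \<Rightarrow> 'a"
    and Y :: "(int \<Rightarrow> 'a) set"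
  assumes "labeled_graph V E s t L"
    and "Y = presented_shift E s t L"
    and "right_resolving E s L"
    and "regular_graph V E s t L"
  shows "\<exists>\<theta>V \<theta>E.
           labeled_graph_hom V E s t L (fc_vertices Y) (fc_edges Y) fc_src fc_tgt fc_lab \<theta>V \<theta>E \<and>
           (\<lambda>x. \<theta>E \<circ> x) ` regular_points (code_map L) (edge_shift E s t) Y
             \<subseteq> regular_points (code_map fc_lab) (edge_shift (fc_edges Y) fc_src fc_tgt) Y \<and>
           (follower_separated V E s t L \<longrightarrow> inj_on \<theta>V V \<and> inj_on \<theta>E E)"
proof (intro exI conjI impI)
  let ?\<theta>E = "future_cover_edge E s t L"
  show hom: "labeled_graph_hom V E s t L (fc_vertices Y) (fc_edges Y) fc_src fc_tgt fc_lab
      (follower_set E s t L) ?\<theta>E"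
    unfolding assms(2) using labeled_graph_hom_future_cover[OF assms(1,3,4)] .
  show "(\<lambda>x. ?\<theta>E \<circ> x) ` regular_points (code_map L) (edge_shift E s t) Y
      \<subseteq> regular_points (code_map fc_lab) (edge_shift (fc_edges Y) fc_src fc_tgt) Y"
  proof (rule image_subsetI)
    fix x assume x: "x \<in> regular_points (code_map L) (edge_shift E s t) Y"
    then have "x \<in> edge_shift E s t"
      unfolding regular_points_def by blast
    then show "?\<theta>E \<circ> x \<in> regular_points (code_map fc_lab) (edge_shift (fc_edges Y) fc_src fc_tgt) Y"
      using regular_points_transfer[where \<theta> = "\<lambda>z. ?\<theta>E \<circ> z", OF x]
        edge_shift_hom_comp[OF hom] code_map_hom_comp[OF hom] left_asymp_hom_comp[OF hom]
        code_map_left_asymp_future_cover[OF assms(3)]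
      unfolding assms(2) by (simp add: image_subset_iff)
  qed
  show "inj_on (follower_set E s t L) V" if "follower_separated V E s t L"
    using that by (simp add: follower_separated_iff_inj_on)
  show "inj_on ?\<theta>E E" if "follower_separated V E s t L"
    using inj_on_future_cover_edge[OF assms(1,3) that] .
qed

end
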